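(* Let $f,g\in\ell_1(\mathbb{Z})$ and $\delta,\kappa>0$. Let $I\subset\mathbb{Z}$ be an integer interval and $I=I_1\cup I_2\cup I_3$ a partition of $I$ into three subsets (not necessarily intervals) such that $|I_3|\in[\delta|I|/2,\delta|I|]$, $|I_2|\leq\delta|I|$, and $f(t_1)\geq\kappa+f(t_3)$ for all $t_1\in I_1$, $t_3\in I_3$. Let $X$ be an integer random variable uniformly distributed on an integer interval $J\subset\mathbb{Z}$ of cardinality at least $|I|$. Then $$\mathbb{P}\big\{|\{t\in I:\ |f(t)-g(t+X)|\geq\kappa/2\}|<\delta|I|/4\big\}\leq 64\delta.$$ *)

theory Defs
  imports "HOL-Analysis.Analysis" "HOL-Probability.Probability"
begin

end

theory Submission
  imports Defs
begin

text \<open>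
  Let \<open>\<alpha> = max f(I\<^sub>3)\<close> and \<open>Z = {s. g s < \<alpha> + \<kappa>/2}\<close>. For a bad shift \<open>x\<close> (fewer than
  \<open>\<delta>|I|/4\<close> mismatches), every \<open>t \<in> I\<^sub>3\<close> with \<open>t + x \<notin> Z\<close> and every \<open>t \<in> I\<^sub>1\<close> with
  \<open>t + x \<in> Z\<close> is a mismatch, so at least \<open>|I\<^sub>3|/2\<close> points of \<open>I\<^sub>3 + x\<close> but at most
  \<open>9\<delta>|I|/4\<close> points of \<open>I + x\<close> lie in \<open>Z\<close>.
  Double counting the pairs \<open>(t, x)\<close> with \<open>t \<in> I\<^sub>3\<close>, \<open>t + x \<in> Z\<close> and \<open>x\<close> a bad shift in a
  window of \<open>|I|\<close> consecutive integers, and covering \<open>I + window\<close> by two translates of \<open>I\<close>,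
  shows that each window contains at most \<open>9\<delta>|I|\<close> bad shifts. As \<open>J\<close> is covered by at
  most \<open>2|J|/|I|\<close> windows, bad shifts have probability at most \<open>18\<delta>\<close>.
\<close>

lemma card_le_by_window_count:
  fixes B :: "int set" and n :: nat and C :: real
  assumes B_sub: "B \<subseteq> {c..d}" and n_pos: "0 < n"
    and window: "\<And>y. real (card (B \<inter> {y..y + int n - 1})) \<le> C"
  shows "real (card B) \<le> real (card {0..(d - c) div int n}) * C"
proof -
  define K where "K j = B \<inter> {c + j * int n .. c + j * int n + int n - 1}" for j
  have "B \<subseteq> (\<Union>j\<in>{0..(d - c) div int n}. K j)"
  proof
    fix x assume x: "x \<in> B"
    define j where "j = (x - c) div int n"
    have "j * int n + (x - c) mod int n = x - c" "0 \<le> (x - c) mod int n" "(x - c) mod int n < int n"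
      using n_pos by (auto simp: j_def)
    moreover have "0 \<le> j" "j \<le> (d - c) div int n"
      using x B_sub n_pos by (auto simp: j_def pos_imp_zdiv_nonneg_iff intro!: zdiv_mono1)
    ultimately show "x \<in> (\<Union>j\<in>{0..(d - c) div int n}. K j)"
      using x by (auto simp: K_def intro!: bexI[of _ j])
  qed
  then have "card B \<le> card (\<Union>j\<in>{0..(d - c) div int n}. K j)"
    by (intro card_mono) (auto simp: K_def)
  also have "\<dots> \<le> (\<Sum>j\<in>{0..(d - c) div int n}. card (K j))"
    by (rule card_UN_le) simp
  finally have "real (card B) \<le> (\<Sum>j\<in>{0..(d - c) div int n}. real (card (K j)))"
    by (metis of_nat_le_iff of_nat_sum)
  also have "\<dots> \<le> real (card {0..(d - c) div int n}) * C"
    by (rule sum_bounded_above) (simp add: K_def window)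
  finally show ?thesis .
qed

lemma card_le_by_windows:
  fixes B :: "int set" and n :: nat and C :: real
  assumes B_sub: "B \<subseteq> {c..d}" and n_pos: "0 < n" and n_le: "n \<le> card {c..d}"
    and window: "\<And>y. real (card (B \<inter> {y..y + int n - 1})) \<le> C"
  shows "real (card B) * real n \<le> 2 * real (card {c..d}) * C"
proof -
  define q where "q = (d - c) div int n"
  have "c \<le> d" "0 \<le> q"
    using n_le n_pos by (auto simp: q_def pos_imp_zdiv_nonneg_iff)
  have "q * int n = (d - c) - (d - c) mod int n"
    by (simp add: q_def minus_mod_eq_div_mult)
  then have "int (card {0..q} * n) \<le> (d - c) + int n"
    using n_pos \<open>0 \<le> q\<close> by (simp add: distrib_right)
  also have "\<dots> \<le> int (2 * card {c..d})"
    using \<open>c \<le> d\<close> n_le by simp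
  finally have "real (card {0..q} * n) \<le> real (2 * card {c..d})"
    by (simp only: of_nat_le_iff)
  then have windows: "real (card {0..q}) * real n \<le> 2 * real (card {c..d})"
    by (simp only: of_nat_mult of_nat_numeral)
  have "0 \<le> C"
    using window[of 0] by (meson of_nat_0_le_iff order_trans)
  have "real (card B) * real n \<le> real (card {0..q}) * C * real n"
    using card_le_by_window_count[OF B_sub n_pos window] by (intro mult_right_mono) (simp_all add: q_def)
  also have "\<dots> \<le> 2 * real (card {c..d}) * C"
    using mult_right_mono[OF windows \<open>0 \<le> C\<close>] by (simp add: mult_ac)
  finally show ?thesis .
qed

lemma card_Int_translate_atLeastAtMost:
  fixes Z :: "int set"
  shows "card (Z \<inter> {a + x..b + x}) = card {t \<in> {a..b}. t + x \<in> Z}"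
proof -
  have "Z \<inter> {a + x..b + x} = (\<lambda>t. t + x) ` {t \<in> {a..b}. t + x \<in> Z}"
    by (auto intro: image_eqI[where x = "_ - x"])
  then show ?thesis
    by (simp add: card_image inj_on_def)
qed

lemma card_Int_atLeastAtMost_le_two_translates:
  fixes Z :: "int set"
  assumes "x\<^sub>0 \<le> x\<^sub>1" and "x\<^sub>1 - x\<^sub>0 \<le> b - a + 1"
  shows "card (Z \<inter> {a + x\<^sub>0..b + x\<^sub>1})
           \<le> card {t \<in> {a..b}. t + x\<^sub>0 \<in> Z} + card {t \<in> {a..b}. t + x\<^sub>1 \<in> Z}"
proof -
  have "Z \<inter> {a + x\<^sub>0..b + x\<^sub>1} \<subseteq> (Z \<inter> {a + x\<^sub>0..b + x\<^sub>0}) \<union> (Z \<inter> {a + x\<^sub>1..b + x\<^sub>1})"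
    using assms by auto
  then have "card (Z \<inter> {a + x\<^sub>0..b + x\<^sub>1})
               \<le> card (Z \<inter> {a + x\<^sub>0..b + x\<^sub>0}) + card (Z \<inter> {a + x\<^sub>1..b + x\<^sub>1})"
    by (metis card_Un_le card_mono finite_Int finite_Un finite_atLeastAtMost_int order_trans)
  then show ?thesis
    by (simp only: card_Int_translate_atLeastAtMost)
qed

lemma sum_card_translate_hits_le:
  fixes X T Z U :: "int set"
  assumes "finite X" "finite T" "finite U" and into_U: "\<And>t x. t \<in> T \<Longrightarrow> x \<in> X \<Longrightarrow> t + x \<in> U"
  shows "(\<Sum>x\<in>X. card {t \<in> T. t + x \<in> Z}) \<le> card T * card (Z \<inter> U)"
proof -
  have "(\<Sum>x\<in>X. card {t \<in> T. t + x \<in> Z}) = (\<Sum>t\<in>T. card {x \<in> X. t + x \<in> Z})"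
    using assms(1,2) by (rule sum_multicount_gen) simp
  also have "\<dots> \<le> (\<Sum>t\<in>T. card (Z \<inter> U))"
  proof (rule sum_mono)
    fix t assume "t \<in> T"
    then have "(\<lambda>x. t + x) ` {x \<in> X. t + x \<in> Z} \<subseteq> Z \<inter> U"
      using into_U by auto
    then have "card ((\<lambda>x. t + x) ` {x \<in> X. t + x \<in> Z}) \<le> card (Z \<inter> U)"
      using \<open>finite U\<close> by (intro card_mono) auto
    then show "card {x \<in> X. t + x \<in> Z} \<le> card (Z \<inter> U)"
      by (simp add: card_image)
  qed
  finally show ?thesis
    by simp
qed

lemma card_shifts_in_window_mult_le:
  fixes B T Z :: "int set" and m W :: real
  assumes T_sub: "T \<subseteq> {a..b}" and "0 \<le> W"
    and hits: "\<And>x. x \<in> B \<Longrightarrow> real (card {t \<in> {a..b}. t + x \<in> Z}) \<le> W"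
    and T_hits: "\<And>x. x \<in> B \<Longrightarrow> m \<le> real (card {t \<in> T. t + x \<in> Z})"
  shows "real (card (B \<inter> {y..y + (b - a)})) * m \<le> real (card T) * (2 * W)"
proof (cases "B \<inter> {y..y + (b - a)} = {}")
  case True
  then show ?thesis
    using \<open>0 \<le> W\<close> by simp
next
  case False
  define X where "X = B \<inter> {y..y + (b - a)}"
  define x\<^sub>0 where "x\<^sub>0 = Min X"
  define x\<^sub>1 where "x\<^sub>1 = Max X"
  have "finite X" "X \<noteq> {}"
    using False by (auto simp: X_def)
  then have x\<^sub>0: "x\<^sub>0 \<in> X" "\<And>x. x \<in> X \<Longrightarrow> x\<^sub>0 \<le> x"
    and x\<^sub>1: "x\<^sub>1 \<in> X" "\<And>x. x \<in> X \<Longrightarrow> x \<le> x\<^sub>1"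
    by (simp_all add: x\<^sub>0_def x\<^sub>1_def)
  have "real (card X) * m \<le> (\<Sum>x\<in>X. real (card {t \<in> T. t + x \<in> Z}))"
    using sum_mono[of X "\<lambda>_. m", OF T_hits] by (simp add: X_def mult.commute)
  also have "\<dots> \<le> real (card T * card (Z \<inter> {a + x\<^sub>0..b + x\<^sub>1}))"
  proof -
    have "t + x \<in> {a + x\<^sub>0..b + x\<^sub>1}" if "t \<in> T" "x \<in> X" for t x
      using T_sub that x\<^sub>0(2)[OF that(2)] x\<^sub>1(2)[OF that(2)] by (auto intro: add_mono)
    then show ?thesis
      unfolding of_nat_sum[symmetric] of_nat_le_iff
      using \<open>finite X\<close> finite_subset[OF T_sub]
      by (intro sum_card_translate_hits_le) auto
  qed
  also have "\<dots> \<le> real (card T) * (real (card {t \<in> {a..b}. t + x\<^sub>0 \<in> Z})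
                                      + real (card {t \<in> {a..b}. t + x\<^sub>1 \<in> Z}))"
  proof -
    have "x\<^sub>0 \<le> x\<^sub>1" "x\<^sub>1 - x\<^sub>0 \<le> b - a + 1"
      using x\<^sub>0 x\<^sub>1 by (force simp: X_def)+
    from card_Int_atLeastAtMost_le_two_translates[OF this, of Z]
    show ?thesis
      unfolding of_nat_mult by (intro mult_left_mono) simp_all
  qed
  also have "\<dots> \<le> real (card T) * (2 * W)"
    using hits[of x\<^sub>0] hits[of x\<^sub>1] x\<^sub>0(1) x\<^sub>1(1) by (intro mult_left_mono) (auto simp: X_def)
  finally show ?thesis
    by (simp add: X_def)
qed

lemma card_concentrated_shifts_le:
  fixes B T Z :: "int set" and W :: real
  assumes B_sub: "B \<subseteq> {c..d}" and I_le_J: "card {a..b} \<le> card {c..d}"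
    and T_sub: "T \<subseteq> {a..b}" and "0 < card T" and "0 \<le> W"
    and hits: "\<And>x. x \<in> B \<Longrightarrow> real (card {t \<in> {a..b}. t + x \<in> Z}) \<le> W"
    and T_hits: "\<And>x. x \<in> B \<Longrightarrow> real (card T) / 2 \<le> real (card {t \<in> T. t + x \<in> Z})"
  shows "real (card B) * real (card {a..b}) \<le> 8 * real (card {c..d}) * W"
proof -
  obtain t where "t \<in> T"
    using \<open>0 < card T\<close> by (metis card.empty ex_in_conv less_irrefl)
  then have "a \<le> b"
    using T_sub by auto
  have "real (card (B \<inter> {y..y + int (card {a..b}) - 1})) \<le> 4 * W" for y
  proof -
    have "{y..y + int (card {a..b}) - 1} = {y..y + (b - a)}"
      using \<open>a \<le> b\<close> by simp
    moreover have "real (card (B \<inter> {y..y + (b - a)})) * (real (card T) / 2) \<le> real (card T) * (2 * W)"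
      using card_shifts_in_window_mult_le[OF T_sub \<open>0 \<le> W\<close> hits T_hits] .
    ultimately show ?thesis
      using \<open>0 < card T\<close> by (simp only:) (simp add: field_simps)
  qed
  from card_le_by_windows[OF B_sub _ I_le_J this]
  show ?thesis
    using \<open>a \<le> b\<close> by simp
qed

lemma separating_level:
  fixes f :: "'a \<Rightarrow> real"
  assumes "finite L" "L \<noteq> {}" and gap: "\<And>h l. h \<in> H \<Longrightarrow> l \<in> L \<Longrightarrow> \<kappa> + f l \<le> f h"
  obtains \<alpha> where "\<And>t. t \<in> H \<Longrightarrow> \<alpha> + \<kappa> \<le> f t" and "\<And>t. t \<in> L \<Longrightarrow> f t \<le> \<alpha>"
proof -
  have "Max (f ` L) \<in> f ` L"
    using assms(1,2) by (intro Max_in) auto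
  then obtain l where l: "l \<in> L" "f l = Max (f ` L)"
    by auto
  show ?thesis
  proof (rule that)
    show "Max (f ` L) + \<kappa> \<le> f t" if "t \<in> H" for t
      using gap[OF that l(1)] l(2) by simp
    show "f t \<le> Max (f ` L)" if "t \<in> L" for t
      using that assms(1) by simp
  qed
qed

lemma card_hits_le_mismatches:
  fixes f h :: "'a \<Rightarrow> real"
  assumes "finite I" "H \<union> M \<union> L = I" and H: "\<And>t. t \<in> H \<Longrightarrow> \<alpha> + \<kappa> \<le> f t"
  shows "card {t \<in> I. h t < \<alpha> + \<kappa> / 2} \<le> card {t \<in> I. \<kappa> / 2 \<le> \<bar>f t - h t\<bar>} + card M + card L"
proof -
  have "\<kappa> / 2 \<le> \<bar>f t - h t\<bar>" if "t \<in> H" "h t < \<alpha> + \<kappa> / 2" for t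
    using H[OF that(1)] that(2) abs_ge_self[of "f t - h t"] by linarith
  then have "{t \<in> I. h t < \<alpha> + \<kappa> / 2} \<subseteq> {t \<in> I. \<kappa> / 2 \<le> \<bar>f t - h t\<bar>} \<union> M \<union> L"
    using assms(2) by blast
  then have "card {t \<in> I. h t < \<alpha> + \<kappa> / 2} \<le> card ({t \<in> I. \<kappa> / 2 \<le> \<bar>f t - h t\<bar>} \<union> M \<union> L)"
    using assms(1,2) by (intro card_mono) auto
  also have "\<dots> \<le> card {t \<in> I. \<kappa> / 2 \<le> \<bar>f t - h t\<bar>} + card M + card L"
    by (meson card_Un_le add_right_mono order_trans)
  finally show ?thesis .
qed

lemma card_le_hits_add_mismatches:
  fixes f h :: "'a \<Rightarrow> real"
  assumes "finite I" "L \<subseteq> I" and L: "\<And>t. t \<in> L \<Longrightarrow> f t \<le> \<alpha>"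
  shows "card L \<le> card {t \<in> L. h t < \<alpha> + \<kappa> / 2} + card {t \<in> I. \<kappa> / 2 \<le> \<bar>f t - h t\<bar>}"
proof -
  have "\<kappa> / 2 \<le> \<bar>f t - h t\<bar>" if "t \<in> L" "\<not> h t < \<alpha> + \<kappa> / 2" for t
    using L[OF that(1)] that(2) abs_ge_minus_self[of "f t - h t"] by linarith
  then have "L \<subseteq> {t \<in> L. h t < \<alpha> + \<kappa> / 2} \<union> {t \<in> I. \<kappa> / 2 \<le> \<bar>f t - h t\<bar>}"
    using assms(2) by blast
  then have "card L \<le> card ({t \<in> L. h t < \<alpha> + \<kappa> / 2} \<union> {t \<in> I. \<kappa> / 2 \<le> \<bar>f t - h t\<bar>})"
    using assms(1,2) by (intro card_mono) (auto intro: finite_subset)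
  also have "\<dots> \<le> card {t \<in> L. h t < \<alpha> + \<kappa> / 2} + card {t \<in> I. \<kappa> / 2 \<le> \<bar>f t - h t\<bar>}"
    by (rule card_Un_le)
  finally show ?thesis .
qed

lemma few_mismatches_hits:
  fixes f h :: "'a \<Rightarrow> real"
  assumes "finite I" and part: "H \<union> M \<union> L = I"
    and H: "\<And>t. t \<in> H \<Longrightarrow> \<alpha> + \<kappa> \<le> f t" and L: "\<And>t. t \<in> L \<Longrightarrow> f t \<le> \<alpha>"
    and M_card: "real (card M) \<le> \<delta> * N"
    and L_card: "\<delta> * N / 2 \<le> real (card L)" "real (card L) \<le> \<delta> * N"
    and few: "real (card {t \<in> I. \<kappa> / 2 \<le> \<bar>f t - h t\<bar>}) < \<delta> * N / 4"
  shows "real (card {t \<in> I. h t < \<alpha> + \<kappa> / 2}) \<le> 9 / 4 * \<delta> * N"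
    and "real (card L) / 2 \<le> real (card {t \<in> L. h t < \<alpha> + \<kappa> / 2})"
proof -
  have "real (card {t \<in> I. h t < \<alpha> + \<kappa> / 2})
          \<le> real (card {t \<in> I. \<kappa> / 2 \<le> \<bar>f t - h t\<bar>}) + real (card M) + real (card L)"
    using of_nat_mono[OF card_hits_le_mismatches[OF \<open>finite I\<close> part H, where h = h]]
    by simp
  then show "real (card {t \<in> I. h t < \<alpha> + \<kappa> / 2}) \<le> 9 / 4 * \<delta> * N"
    using M_card L_card few by linarith
  have "L \<subseteq> I"
    using part by blast
  from of_nat_mono[OF card_le_hits_add_mismatches[OF \<open>finite I\<close> this L, where h = h and \<kappa> = \<kappa>]]
  have "real (card L) \<le> real (card {t \<in> L. h t < \<alpha> + \<kappa> / 2})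
                          + real (card {t \<in> I. \<kappa> / 2 \<le> \<bar>f t - h t\<bar>})"
    by simp
  then show "real (card L) / 2 \<le> real (card {t \<in> L. h t < \<alpha> + \<kappa> / 2})"
    using L_card few by linarith
qed

lemma card_few_mismatch_shifts_le:
  fixes f g :: "int \<Rightarrow> real" and H M L :: "int set"
  assumes part: "H \<union> M \<union> L = {a..b}" and "L \<noteq> {}"
    and H: "\<And>t. t \<in> H \<Longrightarrow> \<alpha> + \<kappa> \<le> f t" and L: "\<And>t. t \<in> L \<Longrightarrow> f t \<le> \<alpha>"
    and M_card: "real (card M) \<le> \<delta> * real (card {a..b})"
    and L_card: "\<delta> * real (card {a..b}) / 2 \<le> real (card L)" "real (card L) \<le> \<delta> * real (card {a..b})"
    and I_le_J: "card {a..b} \<le> card {c..d}"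
  shows "real (card {x \<in> {c..d}. real (card {t \<in> {a..b}. \<kappa> / 2 \<le> \<bar>f t - g (t + x)\<bar>})
                                     < \<delta> * real (card {a..b}) / 4})
           \<le> 18 * \<delta> * real (card {c..d})"
proof -
  define n where "n = card {a..b}"
  define B where "B = {x \<in> {c..d}. real (card {t \<in> {a..b}. \<kappa> / 2 \<le> \<bar>f t - g (t + x)\<bar>})
                                     < \<delta> * real n / 4}"
  have "L \<subseteq> {a..b}"
    using part by blast
  then have "0 < card L" "card L \<le> n"
    using \<open>L \<noteq> {}\<close> finite_subset[of L "{a..b}"] card_mono[of "{a..b}" L]
    by (auto simp: n_def card_gt_0_iff simp del: card_atLeastAtMost_int)
  note setting = finite_atLeastAtMost_int[of a b] part H L
    M_card[folded n_def] L_card[folded n_def]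
  have few: "real (card {t \<in> {a..b}. \<kappa> / 2 \<le> \<bar>f t - g (t + x)\<bar>}) < \<delta> * real n / 4"
    if "x \<in> B" for x
    using that by (simp add: B_def)
  have hits_I: "real (card {t \<in> {a..b}. g (t + x) < \<alpha> + \<kappa> / 2}) \<le> 9 / 4 * \<delta> * real n"
    if "x \<in> B" for x
    using setting few[OF that] by (rule few_mismatches_hits(1))
  have hits_L: "real (card L) / 2 \<le> real (card {t \<in> L. g (t + x) < \<alpha> + \<kappa> / 2})"
    if "x \<in> B" for x
    using setting few[OF that] by (rule few_mismatches_hits(2))
  have "real (card B) * real n \<le> 8 * real (card {c..d}) * (9 / 4 * \<delta> * real n)"
  proof (rule card_concentrated_shifts_le[where a = a and b = b and Z = "{s. g s < \<alpha> + \<kappa> / 2}",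
        folded n_def])
    show "B \<subseteq> {c..d}"
      by (auto simp: B_def)
    show "0 \<le> 9 / 4 * \<delta> * real n"
      using L_card[folded n_def] by linarith
    show "real (card {t \<in> {a..b}. t + x \<in> {s. g s < \<alpha> + \<kappa> / 2}}) \<le> 9 / 4 * \<delta> * real n"
      and "real (card L) / 2 \<le> real (card {t \<in> L. t + x \<in> {s. g s < \<alpha> + \<kappa> / 2}})"
      if "x \<in> B" for x
      using hits_I[OF that] hits_L[OF that] by simp_all
  qed (use I_le_J \<open>L \<subseteq> {a..b}\<close> \<open>0 < card L\<close> in \<open>simp_all add: n_def\<close>)
  then have "real (card B) * real n \<le> (18 * \<delta> * real (card {c..d})) * real n"
    by (simp add: algebra_simps)
  then have "real (card B) \<le> 18 * \<delta> * real (card {c..d})"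
    using \<open>0 < card L\<close> \<open>card L \<le> n\<close> by (simp add: mult_le_cancel_right_pos)
  then show ?thesis
    unfolding B_def n_def .
qed

theorem lemma4p8:
  fixes f g :: "int \<Rightarrow> real" and \<delta> \<kappa> :: real
    and a b c d :: int and I1 I2 I3 :: "int set"
  assumes f_l1: "(\<lambda>t. \<bar>f t\<bar>) summable_on UNIV"
    and g_l1: "(\<lambda>t. \<bar>g t\<bar>) summable_on UNIV"
    and \<delta>_pos: "\<delta> > 0" and \<kappa>_pos: "\<kappa> > 0"
    and part: "I1 \<union> I2 \<union> I3 = {a..b}"
    and disj12: "I1 \<inter> I2 = {}" and disj13: "I1 \<inter> I3 = {}" and disj23: "I2 \<inter> I3 = {}"
    and I3_lower: "\<delta> * real (card {a..b}) / 2 \<le> real (card I3)"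
    and I3_upper: "real (card I3) \<le> \<delta> * real (card {a..b})"
    and I2_card: "real (card I2) \<le> \<delta> * real (card {a..b})"
    and gap: "\<And>t1 t3. t1 \<in> I1 \<Longrightarrow> t3 \<in> I3 \<Longrightarrow> f t1 \<ge> \<kappa> + f t3"
    and J_ne: "{c..d} \<noteq> {}"
    and J_card: "card {c..d} \<ge> card {a..b}"
  shows "measure_pmf.prob (pmf_of_set {c..d})
           {x. real (card {t \<in> {a..b}. \<bar>f t - g (t + x)\<bar> \<ge> \<kappa> / 2})
                 < \<delta> * real (card {a..b}) / 4}
         \<le> 64 * \<delta>"
proof -
  define bad where "bad = {x \<in> {c..d}. real (card {t \<in> {a..b}. \<kappa> / 2 \<le> \<bar>f t - g (t + x)\<bar>})
                                       < \<delta> * real (card {a..b}) / 4}"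
  have "real (card bad) \<le> 18 * \<delta> * real (card {c..d})"
  proof (cases "I3 = {}")
    case True
    then have "card {a..b} = 0"
      using I3_lower \<delta>_pos by (simp add: mult_le_0_iff)
    then show ?thesis
      using \<delta>_pos by (simp add: bad_def)
  next
    case False
    have "finite I3"
      using part by (metis finite_Un finite_atLeastAtMost_int)
    obtain \<alpha> where f_I1: "\<And>t. t \<in> I1 \<Longrightarrow> \<alpha> + \<kappa> \<le> f t" and f_I3: "\<And>t. t \<in> I3 \<Longrightarrow> f t \<le> \<alpha>"
      using separating_level[where H = I1 and \<kappa> = \<kappa> and f = f, OF \<open>finite I3\<close> False gap] by blast
    from part False f_I1 f_I3 I2_card I3_lower I3_upper J_card show ?thesis
      unfolding bad_def by (rule card_few_mismatch_shifts_le)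
  qed
  moreover have "{c..d} \<inter> {x. real (card {t \<in> {a..b}. \<bar>f t - g (t + x)\<bar> \<ge> \<kappa> / 2})
                            < \<delta> * real (card {a..b}) / 4} = bad"
    by (auto simp: bad_def)
  ultimately show ?thesis
    using J_ne \<delta>_pos by (simp add: measure_pmf_of_set divide_le_eq)
qed

end
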